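(* Let $G$ be the three-player game with $A_i=\{a_{i1},a_{i2},a_{i3}\}$ for $i=1,2,3$ and fitness vectors $\pi(a_{1r},a_{2c},a_{3k})$ given as follows (listed for row $r$ of player 1, column $c$ of player 2). For $a_{31}$: $r=1$: $(7,7,7),(3,0,3),(3,0,3)$; $r=2$: $(0,3,3),(7,7,0),(1,1,1)$; $r=3$: $(0,3,3),(1,1,1),(1,1,1)$. For $a_{32}$: $r=1$: $(3,3,0),(1,1,1),(1,1,1)$; $r=2$: $(1,1,1),(7,7,0),(1,1,1)$; $r=3$: $(7,0,7),(7,0,7),(7,0,7)$. For $a_{33}$: $r=1$: $(3,3,0),(1,1,1),(0,7,7)$; $r=2$: $(1,1,1),(7,7,0),(0,7,7)$; $r=3$: $(1,1,1),(1,1,1),(0,7,7)$. Then the strict Nash equilibrium $(a_{11},a_{21},a_{31})$ is not stable under perfect observability, and consequently no strategy profile of $G$ is stable under perfect observability.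
   Context: Preference types: $\Theta=\mathbb{R}^A$, $A=A_1\times A_2\times A_3$ (utility functions on $A$, extended multilinearly to mixed profiles); $\pi_i$ likewise extended. $\mathcal{M}(\Theta^3)$ is the set of product distributions $\mu=\mu_1\times\mu_2\times\mu_3$ with finitely supported marginals; $\operatorname{supp}\mu=\prod_i\operatorname{supp}\mu_i$, $\mu(\theta)=\prod_i\mu_i(\theta_i)$, $\mu_{-i}(\theta_{-i})=\prod_{j\ne i}\mu_j(\theta_j)$. Mutants: for nonempty $J\subseteq N=\{1,2,3\}$, a mutant sub-profile is $\tilde\theta_J\in\prod_{j\in J}(\Theta\setminus\operatorname{supp}\mu_j)$ with shares $\varepsilon\in(0,1)^{|J|}$, $\|\varepsilon\|=\max_j\varepsilon_j$; post-entry $\tilde\mu^\varepsilon_i=(1-\varepsilon_i)\mu_i+\varepsilon_i\delta_{\tilde\theta_i}$ for $i\in J$, $\tilde\mu^\varepsilon_i=\mu_i$ otherwise. Perfect observability: an equilibrium is a map $b:\operatorname{supp}\mu\to\prod_i\Delta(A_i)$ such that each $b(\theta)$ is a Nash equilibrium of the game with payoffs $\theta_1,\theta_2,\theta_3$; $B_1(\mu)$ is the set of these; $(\mu,b)$ is a configuration, with aggregate outcome $\varphi_{\mu,b}(a)=\sum_{\theta}\mu(\theta)\prod_i b_i(\theta)(a_i)$. Average fitness $\Pi_{\theta_i}(\mu;b)=\sum_{\theta'_{-i}}\mu_{-i}(\theta'_{-i})\pi_i(b(\theta_i,\theta'_{-i}))$. Balanced: equal average fitness of all types within each population. Focal set $B_1(\tilde\mu^\varepsilon;b)=\{\tilde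 b\in B_1(\tilde\mu^\varepsilon):\tilde b=b\text{ on }\operatorname{supp}\mu\}$. $(\mu,b)$ is stable if balanced and for every nonempty $J$ and every $\tilde\theta_J$ there is $\bar\epsilon\in(0,1)$ such that for all $\varepsilon$ with $\|\varepsilon\|<\bar\epsilon$ and all $\tilde b$ in the focal set, either (i) some $j\in J$ has $\Pi_{\theta_j}(\tilde\mu^\varepsilon;\tilde b)>\Pi_{\tilde\theta_j}(\tilde\mu^\varepsilon;\tilde b)$ for all $\theta_j\in\operatorname{supp}\mu_j$, or (ii) for every $i$ all types in $\operatorname{supp}\tilde\mu^\varepsilon_i$ have equal average fitness. A profile $\sigma\in\prod_i\Delta(A_i)$ is stable if $\varphi_\sigma(a)=\prod_i\sigma_i(a_i)$ is the aggregate outcome of a stable configuration. *)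

theory Defs
  imports Complex_Main
begin

datatype player = P1 | P2 | P3

lemma UNIV_player: "(UNIV :: player set) = {P1, P2, P3}"
  using player.exhaust by auto

instance player :: finite
  by standard (simp add: UNIV_player)

text \<open>Each player's action set A_i = {a_i1, a_i2, a_i3}.\<close>
datatype act = Act1 | Act2 | Act3

lemma UNIV_act: "(UNIV :: act set) = {Act1, Act2, Act3}"
  using act.exhaust by auto

instance act :: finite
  by standard (simp add: UNIV_act)

type_synonym aprofile = "player \<Rightarrow> act"

type_synonym ptype = "aprofile \<Rightarrow> real"

type_synonym mixed = "act \<Rightarrow> real"
type_synonym mprofile = "player \<Rightarrow> mixed"

definition mixed :: "mixed \<Rightarrow> bool" where
  "mixed s \<longleftrightarrow> (\<forall>a. 0 \<le> s a) \<and> sum s UNIV = 1"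

definition mixedprof :: "mprofile \<Rightarrow> bool" where
  "mixedprof \<sigma> \<longleftrightarrow> (\<forall>i. mixed (\<sigma> i))"

definition EU :: "ptype \<Rightarrow> mprofile \<Rightarrow> real" where
  "EU u \<sigma> = (\<Sum>a\<in>UNIV. (\<Prod>i\<in>UNIV. \<sigma> i (a i)) * u a)"

definition is_NE :: "(player \<Rightarrow> ptype) \<Rightarrow> mprofile \<Rightarrow> bool" where
  "is_NE th \<sigma> \<longleftrightarrow> mixedprof \<sigma> \<and>
     (\<forall>i s. mixed s \<longrightarrow> EU (th i) (\<sigma>(i := s)) \<le> EU (th i) \<sigma>)"

definition supp :: "(ptype \<Rightarrow> real) \<Rightarrow> ptype set" where
  "supp m = {t. m t \<noteq> 0}"

definition is_dist :: "(ptype \<Rightarrow> real) \<Rightarrow> bool" where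
  "is_dist m \<longleftrightarrow> finite (supp m) \<and> (\<forall>t. 0 \<le> m t) \<and> (\<Sum>t\<in>supp m. m t) = 1"

text \<open>Product distributions mu = mu_1 x mu_2 x mu_3, given by their marginals.\<close>
type_synonym pstate = "player \<Rightarrow> ptype \<Rightarrow> real"

definition popstate :: "pstate \<Rightarrow> bool" where
  "popstate mu \<longleftrightarrow> (\<forall>i. is_dist (mu i))"

definition suppP :: "pstate \<Rightarrow> (player \<Rightarrow> ptype) set" where
  "suppP mu = {th. \<forall>i. th i \<in> supp (mu i)}"

type_synonym eqmap = "(player \<Rightarrow> ptype) \<Rightarrow> mprofile"

definition B1 :: "pstate \<Rightarrow> eqmap set" where
  "B1 mu = {b. \<forall>th\<in>suppP mu. is_NE th (b th)}"

definition avg_fit :: "(player \<Rightarrow> ptype) \<Rightarrow> pstate \<Rightarrow> eqmap \<Rightarrow> player \<Rightarrow> ptype \<Rightarrow> real" where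
  "avg_fit \<pi> mu b i t =
     (\<Sum>th\<in>{th. th i = t \<and> (\<forall>j. j \<noteq> i \<longrightarrow> th j \<in> supp (mu j))}.
        (\<Prod>j\<in>UNIV - {i}. mu j (th j)) * EU (\<pi> i) (b th))"

definition balanced :: "(player \<Rightarrow> ptype) \<Rightarrow> pstate \<Rightarrow> eqmap \<Rightarrow> bool" where
  "balanced \<pi> mu b \<longleftrightarrow>
     (\<forall>i. \<forall>t\<in>supp (mu i). \<forall>t'\<in>supp (mu i). avg_fit \<pi> mu b i t = avg_fit \<pi> mu b i t')"

definition post_entry :: "pstate \<Rightarrow> player set \<Rightarrow> (player \<Rightarrow> ptype) \<Rightarrow> (player \<Rightarrow> real) \<Rightarrow> pstate" where
  "post_entry mu J th' eps i =
     (if i \<in> J then (\<lambda>t. (1 - eps i) * mu i t + eps i * (if t = th' i then 1 else 0)) else mu i)"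

definition stable_config :: "(player \<Rightarrow> ptype) \<Rightarrow> pstate \<Rightarrow> eqmap \<Rightarrow> bool" where
  "stable_config \<pi> mu b \<longleftrightarrow>
     popstate mu \<and> b \<in> B1 mu \<and> balanced \<pi> mu b \<and>
     (\<forall>J th'. J \<noteq> {} \<and> (\<forall>j\<in>J. th' j \<notin> supp (mu j)) \<longrightarrow>
        (\<exists>ebar. 0 < ebar \<and> ebar < 1 \<and>
           (\<forall>eps. (\<forall>j\<in>J. 0 < eps j \<and> eps j < 1) \<and> (\<forall>j\<in>J. eps j < ebar) \<longrightarrow>
              (\<forall>b'\<in>B1 (post_entry mu J th' eps).
                 (\<forall>th\<in>suppP mu. b' th = b th) \<longrightarrow>
                 ((\<exists>j\<in>J. \<forall>t\<in>supp (mu j).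
                     avg_fit \<pi> (post_entry mu J th' eps) b' j t >
                     avg_fit \<pi> (post_entry mu J th' eps) b' j (th' j))
                  \<or> balanced \<pi> (post_entry mu J th' eps) b')))))"

definition outcome :: "pstate \<Rightarrow> eqmap \<Rightarrow> aprofile \<Rightarrow> real" where
  "outcome mu b a = (\<Sum>th\<in>suppP mu. (\<Prod>i\<in>UNIV. mu i (th i)) * (\<Prod>i\<in>UNIV. b th i (a i)))"

definition stable_profile :: "(player \<Rightarrow> ptype) \<Rightarrow> mprofile \<Rightarrow> bool" where
  "stable_profile \<pi> \<sigma> \<longleftrightarrow>
     (\<exists>mu b. stable_config \<pi> mu b \<and> (\<forall>a. outcome mu b a = (\<Prod>i\<in>UNIV. \<sigma> i (a i))))"

fun aidx :: "act \<Rightarrow> nat" where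
  "aidx Act1 = 0" | "aidx Act2 = 1" | "aidx Act3 = 2"

text \<open>Table indexed by [k][r][c]: player 3 action k, row r (player 1), column c (player 2).\<close>
definition Gtab :: "(real \<times> real \<times> real) list list list" where
  "Gtab =
    [ [ [(7,7,7),(3,0,3),(3,0,3)], [(0,3,3),(7,7,0),(1,1,1)], [(0,3,3),(1,1,1),(1,1,1)] ],
      [ [(3,3,0),(1,1,1),(1,1,1)], [(1,1,1),(7,7,0),(1,1,1)], [(7,0,7),(7,0,7),(7,0,7)] ],
      [ [(3,3,0),(1,1,1),(0,7,7)], [(1,1,1),(7,7,0),(0,7,7)], [(1,1,1),(1,1,1),(0,7,7)] ] ]"

definition Gvec :: "aprofile \<Rightarrow> real \<times> real \<times> real" where
  "Gvec a = Gtab ! aidx (a P3) ! aidx (a P1) ! aidx (a P2)"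

definition G :: "player \<Rightarrow> ptype" where
  "G i a = (case i of P1 \<Rightarrow> fst (Gvec a) | P2 \<Rightarrow> fst (snd (Gvec a)) | P3 \<Rightarrow> snd (snd (Gvec a)))"

definition sigma0 :: mprofile where
  "sigma0 i a = (if a = Act1 then 1 else 0)"

end

theory Submission
  imports Defs "HOL-Library.FuncSet"
begin

text \<open>Every pair of players of G has a joint action paying both of them the maximal fitness 7
  whatever the third player does, namely (a_12, a_22) for players 1 and 2, (a_13, a_32) for
  players 1 and 3 and (a_23, a_33) for players 2 and 3, and (a_11, a_21, a_31) pays 7 to everybody.
  Let a type with constant preferences enter all three populations. Since every profile is an
  equilibrium for it, the incumbents' equilibrium extends to one in which a mutant facing two
  incumbents plays as some fixed incumbent type would, two mutants coordinate on their
  7-outcome, and three mutants play (a_11, a_21, a_31). Then in every match a mutant earns at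
  least what the imitated incumbent earns, and in population 1 strictly more: an incumbent of
  population 1 facing two mutants gets 0. So mutants are never wiped out, yet the post-entry
  state is not balanced, and no configuration of G at all is stable.\<close>

definition prof3 :: "'a \<Rightarrow> 'a \<Rightarrow> 'a \<Rightarrow> player \<Rightarrow> 'a" where
  "prof3 x y z = (\<lambda>i. case i of P1 \<Rightarrow> x | P2 \<Rightarrow> y | P3 \<Rightarrow> z)"

lemma prof3_apply [simp]: "prof3 x y z P1 = x" "prof3 x y z P2 = y" "prof3 x y z P3 = z"
  by (simp_all add: prof3_def)

lemma prof3_eta: "p = prof3 (p P1) (p P2) (p P3)"
  by (rule ext, case_tac x) simp_all

lemma prof3_eq_iff [simp]: "prof3 x y z = prof3 x' y' z' \<longleftrightarrow> x = x' \<and> y = y' \<and> z = z'"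
  by (metis prof3_apply)

lemma all_player_iff: "(\<forall>i. P i) \<longleftrightarrow> P P1 \<and> P P2 \<and> P P3"
  by (metis player.exhaust)

lemma prof3_update:
  "(prof3 x y z)(P1 := w) = prof3 w y z" "(prof3 x y z)(P2 := w) = prof3 x w z"
  "(prof3 x y z)(P3 := w) = prof3 x y w"
  by (auto simp: fun_eq_iff prof3_def split: player.split)

lemma fun_upd_prof3:
  "p(P1 := x) = prof3 x (p P2) (p P3)" "p(P2 := x) = prof3 (p P1) x (p P3)"
  "p(P3 := x) = prof3 (p P1) (p P2) x"
  by (auto simp: fun_eq_iff prof3_def split: player.split)

lemma EU_nested_sum:
  "EU u \<sigma> = (\<Sum>x\<in>UNIV. \<sigma> P1 x * (\<Sum>y\<in>UNIV. \<sigma> P2 y * (\<Sum>z\<in>UNIV. \<sigma> P3 z * u (prof3 x y z))))"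
proof -
  have weight: "(\<Prod>i\<in>UNIV. \<sigma> i (a i)) = \<sigma> P1 (a P1) * \<sigma> P2 (a P2) * \<sigma> P3 (a P3)" for a
    by (simp add: UNIV_player)
  have bij: "bij_betw (\<lambda>(x, y, z). prof3 x y z) UNIV (UNIV :: aprofile set)"
    by (auto simp: bij_betw_def inj_def image_iff) (metis prof3_eta)
  have "EU u \<sigma> = (\<Sum>a\<in>UNIV. \<sigma> P1 (a P1) * \<sigma> P2 (a P2) * \<sigma> P3 (a P3) * u a)"
    by (simp add: EU_def weight)
  also have "\<dots> = (\<Sum>(x, y, z)\<in>UNIV. \<sigma> P1 x * \<sigma> P2 y * \<sigma> P3 z * u (prof3 x y z))"
    by (subst sum.reindex_bij_betw[OF bij, symmetric]) (simp add: case_prod_beta)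
  also have "\<dots> = (\<Sum>x\<in>UNIV. \<Sum>y\<in>UNIV. \<Sum>z\<in>UNIV. \<sigma> P1 x * \<sigma> P2 y * \<sigma> P3 z * u (prof3 x y z))"
    by (simp add: sum.cartesian_product[symmetric] UNIV_Times_UNIV[symmetric] del: UNIV_Times_UNIV)
  finally show ?thesis
    by (simp add: sum_distrib_left mult.assoc)
qed

definition pure_profile :: "aprofile \<Rightarrow> mprofile" where
  "pure_profile p = (\<lambda>i a. if a = p i then 1 else 0)"

lemma sum_indicator_mult [simp]: "(\<Sum>x\<in>UNIV. (if x = (a::act) then 1 else 0) * (f x :: real)) = f a"
proof -
  have "(if x = a then 1 else 0) * f x = (if x = a then f x else 0)" for x
    by simp
  then show ?thesis
    by simp
qed

lemma mixedprof_pure_profile: "mixedprof (pure_profile p)"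
  by (simp add: mixedprof_def mixed_def pure_profile_def)

lemma EU_pure_profile: "EU u (pure_profile p) = u p"
  by (simp add: EU_nested_sum pure_profile_def) (metis prof3_eta)

lemma EU_pure_profile_update: "EU u ((pure_profile p)(i := s)) = (\<Sum>a\<in>UNIV. s a * u (p(i := a)))"
  by (cases i) (simp_all add: EU_nested_sum pure_profile_def fun_upd_prof3)

lemma mixed_sum_le:
  assumes "mixed s" "\<And>a. f a \<le> M"
  shows "(\<Sum>a\<in>UNIV. s a * f a) \<le> (M :: real)"
proof -
  have "(\<Sum>a\<in>UNIV. s a * f a) \<le> (\<Sum>a\<in>UNIV. s a * M)"
    using assms by (intro sum_mono mult_left_mono) (auto simp: mixed_def)
  also have "\<dots> = M"
    using assms(1) by (simp add: mixed_def sum_distrib_right[symmetric])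
  finally show ?thesis .
qed

lemma EU_le_bound: "mixedprof \<sigma> \<Longrightarrow> (\<And>a. u a \<le> M) \<Longrightarrow> EU u \<sigma> \<le> M"
  unfolding EU_nested_sum mixedprof_def by (intro mixed_sum_le) auto

lemma EU_const: "mixedprof \<sigma> \<Longrightarrow> EU (\<lambda>_. c) \<sigma> = c"
  unfolding EU_nested_sum mixedprof_def by (simp add: mixed_def sum_distrib_right[symmetric])

lemma mixedprof_update: "mixedprof \<sigma> \<Longrightarrow> mixed s \<Longrightarrow> mixedprof (\<sigma>(i := s))"
  by (simp add: mixedprof_def)

definition best_reply :: "(act \<Rightarrow> real) \<Rightarrow> act" where
  "best_reply h = (if h Act2 \<le> h Act1 \<and> h Act3 \<le> h Act1 then Act1
                   else if h Act3 \<le> h Act2 then Act2 else Act3)"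

lemma best_reply_max: "h a \<le> h (best_reply h)"
  by (cases a) (auto simp: best_reply_def)

lemma is_NE_pure_profile:
  assumes "\<And>i. (\<exists>c. th i = (\<lambda>_. c)) \<or> p i = best_reply (\<lambda>a. th i (p(i := a)))"
  shows "is_NE th (pure_profile p)"
  unfolding is_NE_def
proof (intro conjI allI impI mixedprof_pure_profile)
  fix i s assume s: "mixed s"
  show "EU (th i) ((pure_profile p)(i := s)) \<le> EU (th i) (pure_profile p)"
  proof (cases "\<exists>c. th i = (\<lambda>_. c)")
    case True
    then show ?thesis
      using s by (auto simp: EU_const mixedprof_update mixedprof_pure_profile)
  next
    case False
    then have reply: "p i = best_reply (\<lambda>a. th i (p(i := a)))"
      using assms by blast
    have "EU (th i) ((pure_profile p)(i := s)) \<le> th i (p(i := p i))"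
      unfolding EU_pure_profile_update by (rule mixed_sum_le[OF s]) (subst reply, rule best_reply_max)
    then show ?thesis
      by (simp add: EU_pure_profile)
  qed
qed

lemma is_NE_indifferent_update:
  assumes "is_NE th' \<sigma>" "th i = (\<lambda>_. c)" "\<And>j. j \<noteq> i \<Longrightarrow> th j = th' j"
  shows "is_NE th \<sigma>"
  unfolding is_NE_def
proof (intro conjI allI impI)
  show \<sigma>: "mixedprof \<sigma>"
    using assms(1) by (simp add: is_NE_def)
  fix j s assume "mixed s"
  then show "EU (th j) (\<sigma>(j := s)) \<le> EU (th j) \<sigma>"
    using assms \<sigma> by (cases "j = i") (simp_all add: EU_const mixedprof_update is_NE_def)
qed

lemma G_le_7: "G i a \<le> 7"
proof -
  have "G i (prof3 x y z) \<le> 7" for x y z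
    by (cases i; cases x; cases y; cases z) (simp_all add: G_def Gvec_def Gtab_def)
  then show ?thesis
    by (metis prof3_eta)
qed

lemma G_unanimous: "G i (prof3 Act1 Act1 Act1) = 7"
  by (cases i) (simp_all add: G_def Gvec_def Gtab_def)

lemma G_coordination_12: "G P1 (prof3 Act2 Act2 z) = 7" "G P2 (prof3 Act2 Act2 z) = 7"
  by (cases z; simp add: G_def Gvec_def Gtab_def)+

lemma G_coordination_13: "G P1 (prof3 Act3 y Act2) = 7" "G P3 (prof3 Act3 y Act2) = 7"
  by (cases y; simp add: G_def Gvec_def Gtab_def)+

lemma G_coordination_23: "G P2 (prof3 x Act3 Act3) = 7" "G P3 (prof3 x Act3 Act3) = 7"
  by (cases x; simp add: G_def Gvec_def Gtab_def)+

lemma G_P1_punished: "G P1 (prof3 x Act3 Act3) = 0"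
  by (cases x) (simp_all add: G_def Gvec_def Gtab_def)

lemma supp_nonempty: "is_dist m \<Longrightarrow> supp m \<noteq> {}"
  unfolding is_dist_def by auto

lemma supp_post_entry:
  assumes "j \<in> J" "th' j \<notin> supp (mu j)" "0 < eps j" "eps j < 1"
  shows "supp (post_entry mu J th' eps j) = insert (th' j) (supp (mu j))"
  using assms by (auto simp: supp_def post_entry_def)

lemma post_entry_mutant_share:
  "j \<in> J \<Longrightarrow> th' j \<notin> supp (mu j) \<Longrightarrow> post_entry mu J th' eps j (th' j) = eps j"
  by (simp add: post_entry_def supp_def)

lemma exists_fresh_constant_type:
  fixes mu :: pstate
  assumes "\<And>j. finite (supp (mu j))"
  obtains c where "\<And>j. (\<lambda>_. c) \<notin> supp (mu j)"
proof -
  let ?values = "(\<lambda>t. t (\<lambda>_. Act1)) ` (\<Union>j. supp (mu j))"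
  have "finite ?values"
    using assms by simp
  then obtain c :: real where "c \<notin> ?values"
    using ex_new_if_finite[OF infinite_UNIV_char_0] by blast
  have "(\<lambda>_. c) \<notin> supp (mu j)" for j
  proof
    assume "(\<lambda>_. c) \<in> supp (mu j)"
    then have "c \<in> ?values"
      by (intro image_eqI[where x = "\<lambda>_. c"]) auto
    with \<open>c \<notin> ?values\<close> show False
      by simp
  qed
  then show thesis
    using that by blast
qed

lemma finite_matches:
  fixes i :: player
  assumes "\<And>j. finite (A j)"
  shows "finite {th. th i = t \<and> (\<forall>j. j \<noteq> i \<longrightarrow> th j \<in> A j)}"
proof (rule finite_subset)
  show "{th. th i = t \<and> (\<forall>j. j \<noteq> i \<longrightarrow> th j \<in> A j)} \<subseteq> (\<Pi>\<^sub>E j\<in>UNIV. insert t (A j))"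
    by (auto simp: PiE_UNIV_domain)
  show "finite (\<Pi>\<^sub>E j\<in>UNIV. insert t (A j))"
    using assms by (simp add: finite_PiE)
qed

text \<open>The matches of t1 are those of t0 with population i's type replaced, and the weights
  of a match do not involve population i.\<close>

lemma avg_fit_diff:
  "avg_fit \<pi> mu b i t1 - avg_fit \<pi> mu b i t0 =
   (\<Sum>th\<in>{th. th i = t0 \<and> (\<forall>j. j \<noteq> i \<longrightarrow> th j \<in> supp (mu j))}.
      (\<Prod>j\<in>UNIV - {i}. mu j (th j)) * (EU (\<pi> i) (b (th(i := t1))) - EU (\<pi> i) (b th)))"
proof -
  let ?S = "{th. th i = t0 \<and> (\<forall>j. j \<noteq> i \<longrightarrow> th j \<in> supp (mu j))}"
  have weight: "(\<Prod>j\<in>UNIV - {i}. mu j ((th(i := t1)) j)) = (\<Prod>j\<in>UNIV - {i}. mu j (th j))" for th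
    by (rule prod.cong) auto
  have "avg_fit \<pi> mu b i t1 = (\<Sum>th\<in>?S. (\<Prod>j\<in>UNIV - {i}. mu j (th j)) * EU (\<pi> i) (b (th(i := t1))))"
    unfolding avg_fit_def
    by (rule sum.reindex_bij_witness[symmetric, of _ "\<lambda>th. th(i := t0)" "\<lambda>th. th(i := t1)"])
       (auto simp: weight)
  then show ?thesis
    by (simp add: avg_fit_def right_diff_distrib sum_subtractf)
qed

lemma not_stable_config_if_invaded:
  assumes "J \<noteq> {}" "\<forall>j\<in>J. th' j \<notin> supp (mu j)"
    and "\<And>e. 0 < e \<Longrightarrow> e < 1 \<Longrightarrow> \<exists>b'\<in>B1 (post_entry mu J th' (\<lambda>_. e)).
           (\<forall>th\<in>suppP mu. b' th = b th) \<and>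
           (\<forall>j\<in>J. \<exists>t\<in>supp (mu j). avg_fit \<pi> (post_entry mu J th' (\<lambda>_. e)) b' j t
                                 \<le> avg_fit \<pi> (post_entry mu J th' (\<lambda>_. e)) b' j (th' j)) \<and>
           \<not> balanced \<pi> (post_entry mu J th' (\<lambda>_. e)) b'"
  shows "\<not> stable_config \<pi> mu b"
proof
  assume "stable_config \<pi> mu b"
  then obtain ebar where "0 < ebar" "ebar < 1" and invasion_fails:
    "\<And>eps. (\<forall>j\<in>J. 0 < eps j \<and> eps j < 1) \<and> (\<forall>j\<in>J. eps j < ebar) \<Longrightarrow>
       \<forall>b'\<in>B1 (post_entry mu J th' eps). (\<forall>th\<in>suppP mu. b' th = b th) \<longrightarrow>
         (\<exists>j\<in>J. \<forall>t\<in>supp (mu j). avg_fit \<pi> (post_entry mu J th' eps) b' j t >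
                                   avg_fit \<pi> (post_entry mu J th' eps) b' j (th' j))
         \<or> balanced \<pi> (post_entry mu J th' eps) b'"
    using assms(1,2) unfolding stable_config_def by (metis (no_types, lifting))
  define e where "e = ebar / 2"
  have e: "0 < e" "e < 1" "e < ebar"
    using \<open>0 < ebar\<close> \<open>ebar < 1\<close> by (simp_all add: e_def)
  obtain b' where "b' \<in> B1 (post_entry mu J th' (\<lambda>_. e))" "\<forall>th\<in>suppP mu. b' th = b th"
    and weakly_fitter: "\<forall>j\<in>J. \<exists>t\<in>supp (mu j). avg_fit \<pi> (post_entry mu J th' (\<lambda>_. e)) b' j t
                                 \<le> avg_fit \<pi> (post_entry mu J th' (\<lambda>_. e)) b' j (th' j)"
    and "\<not> balanced \<pi> (post_entry mu J th' (\<lambda>_. e)) b'"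
    using assms(3)[OF e(1,2)] by blast
  then have "\<exists>j\<in>J. \<forall>t\<in>supp (mu j). avg_fit \<pi> (post_entry mu J th' (\<lambda>_. e)) b' j t >
                                   avg_fit \<pi> (post_entry mu J th' (\<lambda>_. e)) b' j (th' j)"
    using invasion_fails[of "\<lambda>_. e"] e by blast
  with weakly_fitter show False
    by (meson not_less)
qed

definition mutant_eqmap :: "ptype \<Rightarrow> (player \<Rightarrow> ptype) \<Rightarrow> eqmap \<Rightarrow> eqmap" where
  "mutant_eqmap m t0 b th =
    (if th P1 = m \<and> th P2 = m \<and> th P3 = m then pure_profile (prof3 Act1 Act1 Act1)
     else if th P1 = m \<and> th P2 = m
       then pure_profile (prof3 Act2 Act2 (best_reply (\<lambda>z. th P3 (prof3 Act2 Act2 z))))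
     else if th P1 = m \<and> th P3 = m
       then pure_profile (prof3 Act3 (best_reply (\<lambda>y. th P2 (prof3 Act3 y Act2))) Act2)
     else if th P2 = m \<and> th P3 = m
       then pure_profile (prof3 (best_reply (\<lambda>x. th P1 (prof3 x Act3 Act3))) Act3 Act3)
     else if th P1 = m then b (th(P1 := t0 P1))
     else if th P2 = m then b (th(P2 := t0 P2))
     else if th P3 = m then b (th(P3 := t0 P3))
     else b th)"

lemma mutant_eqmap_incumbents:
  assumes "th \<in> suppP mu" "\<And>j. m \<notin> supp (mu j)"
  shows "mutant_eqmap m t0 b th = b th"
proof -
  have "th j \<noteq> m" for j
    using assms unfolding suppP_def by blast
  then show ?thesis
    by (simp add: mutant_eqmap_def)
qed

lemma mutant_eqmap_imitates:
  assumes "th \<in> suppP mu" "\<And>j. m \<notin> supp (mu j)" "th i = t0 i"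
  shows "mutant_eqmap m t0 b (th(i := m)) = b th"
proof -
  have "th j \<noteq> m" for j
    using assms unfolding suppP_def by blast
  then show ?thesis
    using assms(3) by (cases i) (auto simp: mutant_eqmap_def fun_upd_idem)
qed

lemma EU_mutant_eqmap_coordination:
  assumes "th i = m" "th j = m" "j \<noteq> i"
  shows "EU (G i) (mutant_eqmap m t0 b th) = 7"
  using assms
  by (cases i; cases j; cases "th P1 = m"; cases "th P2 = m"; cases "th P3 = m")
     (simp_all add: mutant_eqmap_def EU_pure_profile G_unanimous G_coordination_12 G_coordination_13
       G_coordination_23)

lemma mutant_eqmap_B1:
  assumes b: "b \<in> B1 mu" and m: "m = (\<lambda>_. c)" and t0: "\<And>j. t0 j \<in> supp (mu j)"
    and supp': "\<And>j. supp (mu' j) \<subseteq> insert m (supp (mu j))"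
  shows "mutant_eqmap m t0 b \<in> B1 mu'"
  unfolding B1_def
proof (intro CollectI ballI)
  fix th assume "th \<in> suppP mu'"
  then have incumbent_or_mutant: "th j \<noteq> m \<Longrightarrow> th j \<in> supp (mu j)" for j
    using supp' unfolding suppP_def by blast
  have incumbents: "is_NE th' (b th')" if "\<forall>j. th' j \<in> supp (mu j)" for th'
    using b that by (simp add: B1_def suppP_def)
  have one_mutant: "is_NE th (b (th(i := t0 i)))"
    if "th i = m" "\<forall>j. j \<noteq> i \<longrightarrow> th j \<noteq> m" for i
  proof (rule is_NE_indifferent_update)
    show "is_NE (th(i := t0 i)) (b (th(i := t0 i)))"
      by (rule incumbents) (use that incumbent_or_mutant t0 in auto)
  qed (use that m in auto)
  have pure_reply: "is_NE th (pure_profile p)"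
    if "\<forall>i. th i = m \<or> p i = best_reply (\<lambda>a. th i (p(i := a)))" for p
    using that m by (intro is_NE_pure_profile) blast
  show "is_NE th (mutant_eqmap m t0 b th)"
    unfolding mutant_eqmap_def
    by (cases "th P1 = m"; cases "th P2 = m"; cases "th P3 = m")
       (simp_all add: one_mutant pure_reply incumbents incumbent_or_mutant all_player_iff prof3_update)
qed

lemma post_entry_nonneg:
  assumes "popstate mu" "\<forall>j\<in>J. 0 \<le> eps j \<and> eps j \<le> 1"
  shows "0 \<le> post_entry mu J th' eps j t"
  using assms by (auto simp: post_entry_def popstate_def is_dist_def)

lemma EU_G_mutant_eqmap_imitation_le:
  assumes fresh: "\<And>k. m \<notin> supp (mu k)" and t0: "\<And>k. t0 k \<in> supp (mu k)"
    and supp': "\<And>k. supp (mu' k) = insert m (supp (mu k))"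
    and b': "mutant_eqmap m t0 b \<in> B1 mu'"
    and th: "th \<in> suppP mu'" "th i = t0 i"
  shows "EU (G i) (mutant_eqmap m t0 b th) \<le> EU (G i) (mutant_eqmap m t0 b (th(i := m)))"
proof (cases "\<exists>j. j \<noteq> i \<and> th j = m")
  case True
  then obtain j where "j \<noteq> i" "th j = m"
    by blast
  then have "EU (G i) (mutant_eqmap m t0 b (th(i := m))) = 7"
    by (intro EU_mutant_eqmap_coordination) auto
  moreover have "EU (G i) (mutant_eqmap m t0 b th) \<le> 7"
    using b' th by (intro EU_le_bound G_le_7) (simp add: B1_def is_NE_def)
  ultimately show ?thesis
    by simp
next
  case False
  have "th j \<in> supp (mu j)" for j
    using False th t0 supp' unfolding suppP_def by (cases "j = i") auto
  then have "th \<in> suppP mu"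
    by (simp add: suppP_def)
  then show ?thesis
    using fresh th(2) by (simp add: mutant_eqmap_incumbents mutant_eqmap_imitates)
qed

lemma G_indifferent_mutants_invade:
  assumes mu: "popstate mu" and b: "b \<in> B1 mu" and m: "m = (\<lambda>_. c)"
    and fresh: "\<And>j. m \<notin> supp (mu j)" and t0: "\<And>j. t0 j \<in> supp (mu j)"
    and e: "0 < e" "e < 1"
  defines "mu' \<equiv> post_entry mu UNIV (\<lambda>_. m) (\<lambda>_. e)"
  shows "mutant_eqmap m t0 b \<in> B1 mu'"
    and "avg_fit G mu' (mutant_eqmap m t0 b) j (t0 j) \<le> avg_fit G mu' (mutant_eqmap m t0 b) j m"
    and "\<not> balanced G mu' (mutant_eqmap m t0 b)"
proof -
  let ?b' = "mutant_eqmap m t0 b"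
  have supp': "supp (mu' k) = insert m (supp (mu k))" for k
    unfolding mu'_def using fresh e by (simp add: supp_post_entry)
  show b': "?b' \<in> B1 mu'"
    by (rule mutant_eqmap_B1[OF b m t0]) (simp add: supp')
  let ?gain = "\<lambda>i th. (\<Prod>k\<in>UNIV - {i}. mu' k (th k)) * (EU (G i) (?b' (th(i := m))) - EU (G i) (?b' th))"
  let ?matches = "\<lambda>i. {th. th i = t0 i \<and> (\<forall>k. k \<noteq> i \<longrightarrow> th k \<in> supp (mu' k))}"
  have gain_nonneg: "0 \<le> ?gain i th" if "th \<in> ?matches i" for i th
  proof (intro mult_nonneg_nonneg prod_nonneg)
    show "0 \<le> mu' k (th k)" for k
      unfolding mu'_def using mu e by (intro post_entry_nonneg) auto
    have "th k \<in> supp (mu' k)" for k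
      using that t0[of k] supp'[of k] by (cases "k = i") auto
    then have "th \<in> suppP mu'"
      by (simp add: suppP_def)
    then show "0 \<le> EU (G i) (?b' (th(i := m))) - EU (G i) (?b' th)"
      using EU_G_mutant_eqmap_imitation_le[OF fresh t0 supp' b'] that by simp
  qed
  have "0 \<le> sum (?gain j) (?matches j)"
    by (rule sum_nonneg) (rule gain_nonneg)
  then show "avg_fit G mu' ?b' j (t0 j) \<le> avg_fit G mu' ?b' j m"
    using avg_fit_diff[of G mu' ?b' j m "t0 j"] by simp
  let ?x = "prof3 (t0 P1) m m"
  have "0 < ?gain P1 ?x"
  proof -
    have "UNIV - {P1} = {P2, P3}"
      by (auto simp: UNIV_player)
    moreover have "mu' k m = e" for k
      unfolding mu'_def using fresh post_entry_mutant_share[of k UNIV "\<lambda>_. m" mu] by simp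
    moreover have "t0 P1 \<noteq> m"
      using fresh t0 by metis
    ultimately show ?thesis
      using e by (simp add: mutant_eqmap_def EU_pure_profile prof3_update G_unanimous G_P1_punished)
  qed
  moreover have "?x \<in> ?matches P1"
    using supp' by (auto simp: all_player_iff)
  moreover have "finite (?matches P1)"
    using mu supp' by (intro finite_matches) (simp add: popstate_def is_dist_def)
  ultimately have "0 < sum (?gain P1) (?matches P1)"
    using gain_nonneg by (intro sum_pos2) auto
  then have "avg_fit G mu' ?b' P1 (t0 P1) < avg_fit G mu' ?b' P1 m"
    using avg_fit_diff[of G mu' ?b' P1 m "t0 P1"] by simp
  moreover have "t0 P1 \<in> supp (mu' P1)" "m \<in> supp (mu' P1)"
    using supp' t0 by simp_all
  ultimately show "\<not> balanced G mu' ?b'"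
    unfolding balanced_def by (metis less_irrefl)
qed

lemma G_no_stable_config: "\<not> stable_config G mu b"
proof (cases "popstate mu \<and> b \<in> B1 mu")
  case False
  then show ?thesis
    by (auto simp: stable_config_def)
next
  case True
  then have mu: "popstate mu" and b: "b \<in> B1 mu"
    by simp_all
  then have "finite (supp (mu j))" and "\<exists>t. t \<in> supp (mu j)" for j
    by (simp_all add: popstate_def is_dist_def supp_nonempty ex_in_conv)
  then obtain c t0 where fresh: "\<And>j. (\<lambda>_. c) \<notin> supp (mu j)" and t0: "\<And>j. t0 j \<in> supp (mu j)"
    by (metis exists_fresh_constant_type)
  show ?thesis
  proof (rule not_stable_config_if_invaded[where J = UNIV and th' = "\<lambda>_. \<lambda>_. c"])
    fix e :: real assume "0 < e" "e < 1"
    note invade = G_indifferent_mutants_invade[OF mu b refl fresh t0 this]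
    moreover have "\<forall>th\<in>suppP mu. mutant_eqmap (\<lambda>_. c) t0 b th = b th"
      using fresh by (simp add: mutant_eqmap_incumbents)
    ultimately show "\<exists>b'\<in>B1 (post_entry mu UNIV (\<lambda>_. \<lambda>_. c) (\<lambda>_. e)).
        (\<forall>th\<in>suppP mu. b' th = b th) \<and>
        (\<forall>j\<in>UNIV. \<exists>t\<in>supp (mu j). avg_fit G (post_entry mu UNIV (\<lambda>_. \<lambda>_. c) (\<lambda>_. e)) b' j t
           \<le> avg_fit G (post_entry mu UNIV (\<lambda>_. \<lambda>_. c) (\<lambda>_. e)) b' j ((\<lambda>_. \<lambda>_. c) j)) \<and>
        \<not> balanced G (post_entry mu UNIV (\<lambda>_. \<lambda>_. c) (\<lambda>_. e)) b'"
      using t0 by blast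
  qed (use fresh in auto)
qed

theorem mainTheorem7:
  shows "\<not> stable_profile G sigma0 \<and> (\<forall>\<sigma>. mixedprof \<sigma> \<longrightarrow> \<not> stable_profile G \<sigma>)"
  using G_no_stable_config unfolding stable_profile_def by blast

end
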